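(* Let $\pi$ be a qlg-$2$-sortable permutation. Then: (i) $\pi$ avoids the pattern $3214$; (ii) every occurrence of the pattern $52314$ in $\pi$ can be extended to an occurrence of one of the following patterns, where the dotted entries are the additional entries and the undotted entries form the given occurrence of $52314$: $63\dot{1}425$; $7\dot{2}\dot{1}4536$; $7\dot{3}\dot{1}4526$; $\dot{7}\dot{2}8\dot{1}4536$; $\dot{7}\dot{3}8\dot{1}4526$; $\dot{8}\dot{2}7\dot{1}4536$; $\dot{8}\dot{3}7\dot{1}4526$.
   Context: The $\mathfrak{D}^2\mathfrak{I}$ machine consists of two decreasing stacks $D_1,D_2$ followed in series by an increasing stack $I$. Elements of $D_1,D_2$ must be in decreasing order from top to bottom (top largest); elements of $I$ in increasing order from top to bottom (top smallest). Operations: $d_0$ pushes the next input element into $D_1$; $d_1$ moves the top of $D_1$ to $D_2$; $d_2$ moves the top of $D_2$ to $I$; $d_3$ pops the top of $I$ and appends it to the output. An operation is legal if it respects the stack restrictions; $d_3$ is legal if the popped element is the smallest among the elements not yet output, and also if no other operation is legal. The quasi left-greedy procedure performs at each step the first legal operation in the priority order $d_3\rhd d_1\rhd d_0\rhd d_2$. A permutation is qlg-$2$-sortable if this procedure outputs its elements in increasing order. An occurrence of a pattern with dotted entries extending a given occurrence of $52314$ means a set of entries of $\pi$ forming an occurrence of the full pattern, in which the entries corresponding to the undotted positions are exactly the given occurrence of $52314$. *)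

theory Defs
  imports Main
begin

text \<open>Permutations are lists of naturals with values exactly 1..n.
  Stacks are lists whose head is the top. A machine state is
  (remaining input, D1, D2, I, output so far).\<close>

definition is_perm :: "nat list \<Rightarrow> bool" where
  "is_perm p \<longleftrightarrow> distinct p \<and> set p = {1..length p}"

type_synonym mstate = "nat list \<times> nat list \<times> nat list \<times> nat list \<times> nat list"

definition d0_legal :: "mstate \<Rightarrow> bool" where
  "d0_legal s = (case s of (inp, d1, d2, i, out) \<Rightarrow>
      inp \<noteq> [] \<and> (d1 = [] \<or> hd inp > hd d1))"

definition d1_legal :: "mstate \<Rightarrow> bool" where
  "d1_legal s = (case s of (inp, d1, d2, i, out) \<Rightarrow>
      d1 \<noteq> [] \<and> (d2 = [] \<or> hd d1 > hd d2))"

definition d2_legal :: "mstate \<Rightarrow> bool" where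
  "d2_legal s = (case s of (inp, d1, d2, i, out) \<Rightarrow>
      d2 \<noteq> [] \<and> (i = [] \<or> hd d2 < hd i))"

definition d3_legal :: "mstate \<Rightarrow> bool" where
  "d3_legal s = (case s of (inp, d1, d2, i, out) \<Rightarrow>
      i \<noteq> [] \<and> (hd i = Min (set (inp @ d1 @ d2 @ i))
                  \<or> \<not> (d0_legal s \<or> d1_legal s \<or> d2_legal s)))"

definition qlg_step :: "mstate \<Rightarrow> mstate" where
  "qlg_step s = (case s of (inp, d1, d2, i, out) \<Rightarrow>
     if d3_legal s then (inp, d1, d2, tl i, out @ [hd i])
     else if d1_legal s then (inp, tl d1, hd d1 # d2, i, out)
     else if d0_legal s then (tl inp, hd inp # d1, d2, i, out)
     else if d2_legal s then (inp, d1, tl d2, hd d2 # i, out)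
     else s)"

text \<open>Each element undergoes exactly four operations, so after 4n steps the
  procedure has terminated.\<close>
definition qlg_output :: "nat list \<Rightarrow> nat list" where
  "qlg_output p = (let (_, _, _, _, out) = (qlg_step ^^ (4 * length p)) (p, [], [], [], []) in out)"

definition qlg2_sortable :: "nat list \<Rightarrow> bool" where
  "qlg2_sortable p \<longleftrightarrow> is_perm p \<and> qlg_output p = sort p"

definition occurrence :: "nat list \<Rightarrow> nat list \<Rightarrow> nat list \<Rightarrow> bool" where
  "occurrence p q js \<longleftrightarrow> length js = length q \<and> sorted_wrt (<) js \<and>
     (\<forall>j\<in>set js. j < length p) \<and>
     (\<forall>a<length q. \<forall>b<length q. (p ! (js ! a) < p ! (js ! b)) \<longleftrightarrow> (q ! a < q ! b))"

definition contains :: "nat list \<Rightarrow> nat list \<Rightarrow> bool" where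
  "contains p q \<longleftrightarrow> (\<exists>js. occurrence p q js)"

text \<open>Extension of a given occurrence: a pattern q together with the list U of
  its undotted positions; the undotted entries are exactly the given occurrence.\<close>
definition extends_to :: "nat list \<Rightarrow> nat list \<Rightarrow> nat list \<times> nat list \<Rightarrow> bool" where
  "extends_to p is qU \<longleftrightarrow> (\<exists>js. occurrence p (fst qU) js \<and> map (\<lambda>u. js ! u) (snd qU) = is)"

definition ext_patterns :: "(nat list \<times> nat list) list" where
  "ext_patterns =
    [ ([6,3,1,4,2,5], [0,1,3,4,5]),
      ([7,2,1,4,5,3,6], [0,3,4,5,6]),
      ([7,3,1,4,5,2,6], [0,3,4,5,6]),
      ([7,2,8,1,4,5,3,6], [2,4,5,6,7]),
      ([7,3,8,1,4,5,2,6], [2,4,5,6,7]),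
      ([8,2,7,1,4,5,3,6], [2,4,5,6,7]),
      ([8,3,7,1,4,5,2,6], [2,4,5,6,7]) ]"

end

theory Submission
  imports Defs "HOL-Library.Multiset"
begin

text \<open>In a run that sorts, every element already output is smaller than every element not yet
  output. Hence a deadlock can never arise: an element \<open>c\<close> in \<open>I\<close> together with
  \<open>x < c < y\<close> in the \<open>D\<close>-stacks, \<open>y\<close> bound to enter \<open>I\<close> before \<open>x\<close>. Indeed \<open>y\<close> cannot pass
  \<open>c\<close>, and \<open>c\<close> may leave only after \<open>x\<close>. In particular, once some \<open>c\<close> in \<open>I\<close> lies above a
  smaller element of the \<open>D\<close>-stacks, no element larger than \<open>c\<close> may still be unread.

  For an occurrence \<open>c b a d\<close> of 3214, \<open>c\<close> has reached \<open>D\<^sub>2\<close> or \<open>I\<close> when \<open>b\<close> is read and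
  sits in \<open>I\<close> by the time \<open>a\<close> is read, while \<open>d\<close> is unread.

  For an occurrence \<open>A\<^sub>5 A\<^sub>2 A\<^sub>3 A\<^sub>1 A\<^sub>4\<close> of 52314, the same argument puts \<open>A\<^sub>2, A\<^sub>3\<close> into
  \<open>D\<^sub>2\<close> when \<open>A\<^sub>1\<close> is read. Consider the step moving \<open>A\<^sub>2\<close> onto \<open>D\<^sub>2\<close>. If the next input
  entry is then smaller than \<open>A\<^sub>2\<close>, it is an entry below \<open>A\<^sub>1\<close> between \<open>A\<^sub>2\<close> and \<open>A\<^sub>3\<close>
  (pattern 631425). Otherwise \<open>A\<^sub>2\<close> was moved right after being read; at the last \<open>d\<^sub>2\<close> before
  that, the next input entry \<open>v\<close> and the top \<open>y\<close> of \<open>D\<^sub>1\<close> satisfy \<open>v < A\<^sub>1\<close>, \<open>v < y < A\<^sub>2\<close>.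
  If \<open>y\<close> lies left of \<open>A\<^sub>5\<close>, the top of \<open>D\<^sub>2\<close> at the time \<open>y\<close> was read is an entry
  larger than \<open>A\<^sub>4\<close> further left; this gives the remaining six patterns.\<close>

lemma sorted_wrt_gt_le_hd: "sorted_wrt (>) xs \<Longrightarrow> y \<in> set xs \<Longrightarrow> y \<le> (hd xs :: 'a :: linorder)"
  by (cases xs) auto

lemma sorted_wrt_lt_hd_le: "sorted_wrt (<) xs \<Longrightarrow> y \<in> set xs \<Longrightarrow> hd xs \<le> (y :: 'a :: linorder)"
  by (cases xs) auto

lemma sorted_wrt_gt_Cons:
  "sorted_wrt (>) xs \<Longrightarrow> xs = [] \<or> hd xs < x \<Longrightarrow> sorted_wrt (>) (x # (xs :: 'a :: linorder list))"
  by (cases xs) (auto dest: sorted_wrt_gt_le_hd)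

lemma sorted_wrt_lt_Cons:
  "sorted_wrt (<) xs \<Longrightarrow> xs = [] \<or> x < hd xs \<Longrightarrow> sorted_wrt (<) (x # (xs :: 'a :: linorder list))"
  by (cases xs) (auto dest: sorted_wrt_lt_hd_le)

lemma sorted_wrt_tl: "sorted_wrt R xs \<Longrightarrow> sorted_wrt R (tl xs)"
  by (cases xs) auto

lemma distinct_in_set_tl_iff: "distinct xs \<Longrightarrow> x \<in> set (tl xs) \<longleftrightarrow> x \<in> set xs \<and> x \<noteq> hd xs"
  by (cases xs) auto

lemma distinct_nth_in_set_drop_iff:
  assumes "distinct xs" "j < length xs"
  shows "xs ! j \<in> set (drop k xs) \<longleftrightarrow> k \<le> j"
proof
  assume "xs ! j \<in> set (drop k xs)"
  then obtain i where "i < length (drop k xs)" "drop k xs ! i = xs ! j" by (metis in_set_conv_nth)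
  then show "k \<le> j" using assms nth_eq_iff_index_eq by fastforce
next
  assume "k \<le> j"
  then have "drop k xs ! (j - k) = xs ! j" "j - k < length (drop k xs)" using assms(2) by auto
  then show "xs ! j \<in> set (drop k xs)" by (metis nth_mem)
qed

lemma last_index_with:
  assumes "P w" "w < (m :: nat)"
  obtains m' where "w \<le> m'" "m' < m" "P m'" "\<And>\<sigma>. m' < \<sigma> \<Longrightarrow> \<sigma> < m \<Longrightarrow> \<not> P \<sigma>"
proof -
  let ?M = "{\<sigma>. w \<le> \<sigma> \<and> \<sigma> < m \<and> P \<sigma>}"
  have fin: "finite ?M" and ne: "?M \<noteq> {}" using assms by auto
  have "Max ?M \<in> ?M" using Max_in[OF fin ne] .
  moreover have "\<not> P \<sigma>" if "Max ?M < \<sigma>" "\<sigma> < m" for \<sigma>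
  proof
    assume "P \<sigma>"
    then have "\<sigma> \<in> ?M" using \<open>Max ?M \<in> ?M\<close> that by auto
    then show False using Max_ge[OF fin] that(1) by fastforce
  qed
  ultimately show ?thesis using that[of "Max ?M"] by blast
qed

section \<open>Machine states\<close>

definition st_in :: "mstate \<Rightarrow> nat list" where "st_in s = fst s"
definition st_d1 :: "mstate \<Rightarrow> nat list" where "st_d1 s = fst (snd s)"
definition st_d2 :: "mstate \<Rightarrow> nat list" where "st_d2 s = fst (snd (snd s))"
definition st_i :: "mstate \<Rightarrow> nat list" where "st_i s = fst (snd (snd (snd s)))"
definition st_out :: "mstate \<Rightarrow> nat list" where "st_out s = snd (snd (snd (snd s)))"

lemma st_sel [simp]:
  "st_in (inp, d1, d2, i, out) = inp" "st_d1 (inp, d1, d2, i, out) = d1"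
  "st_d2 (inp, d1, d2, i, out) = d2" "st_i (inp, d1, d2, i, out) = i"
  "st_out (inp, d1, d2, i, out) = out"
  by (simp_all add: st_in_def st_d1_def st_d2_def st_i_def st_out_def)

lemma d0_legal_iff: "d0_legal s \<longleftrightarrow> st_in s \<noteq> [] \<and> (st_d1 s = [] \<or> hd (st_d1 s) < hd (st_in s))"
  by (cases s) (simp add: d0_legal_def)

lemma d1_legal_iff: "d1_legal s \<longleftrightarrow> st_d1 s \<noteq> [] \<and> (st_d2 s = [] \<or> hd (st_d2 s) < hd (st_d1 s))"
  by (cases s) (simp add: d1_legal_def)

lemma d2_legal_iff: "d2_legal s \<longleftrightarrow> st_d2 s \<noteq> [] \<and> (st_i s = [] \<or> hd (st_d2 s) < hd (st_i s))"
  by (cases s) (simp add: d2_legal_def)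

lemma d3_legal_imp: "d3_legal s \<Longrightarrow> st_i s \<noteq> []"
  by (cases s) (simp add: d3_legal_def)

definition qlg_op :: "mstate \<Rightarrow> nat" where
  "qlg_op s = (if d3_legal s then 3 else if d1_legal s then 1 else if d0_legal s then 0
     else if d2_legal s then 2 else 4)"

lemma qlg_op_cases: "qlg_op s \<in> {0, 1, 2, 3, 4}"
  by (simp add: qlg_op_def)

lemma qlg_op_facts:
  "qlg_op s = 0 \<Longrightarrow> d0_legal s \<and> \<not> d1_legal s"
  "qlg_op s = 1 \<Longrightarrow> d1_legal s"
  "qlg_op s = 2 \<Longrightarrow> d2_legal s \<and> \<not> d0_legal s \<and> \<not> d1_legal s"
  "qlg_op s = 3 \<Longrightarrow> st_i s \<noteq> []"
  "d1_legal s \<Longrightarrow> qlg_op s = 1 \<or> qlg_op s = 3"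
  by (auto simp: qlg_op_def d3_legal_imp split: if_splits)

lemma qlg_step_sel:
  "st_in (qlg_step s) = (if qlg_op s = 0 then tl (st_in s) else st_in s)"
  "st_d1 (qlg_step s) = (if qlg_op s = 0 then hd (st_in s) # st_d1 s
     else if qlg_op s = 1 then tl (st_d1 s) else st_d1 s)"
  "st_d2 (qlg_step s) = (if qlg_op s = 1 then hd (st_d1 s) # st_d2 s
     else if qlg_op s = 2 then tl (st_d2 s) else st_d2 s)"
  "st_i (qlg_step s) = (if qlg_op s = 2 then hd (st_d2 s) # st_i s
     else if qlg_op s = 3 then tl (st_i s) else st_i s)"
  "st_out (qlg_step s) = (if qlg_op s = 3 then st_out s @ [hd (st_i s)] else st_out s)"
  by (cases s; simp add: qlg_step_def qlg_op_def)+

definition contents :: "mstate \<Rightarrow> nat list" where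
  "contents s = st_in s @ st_d1 s @ st_d2 s @ st_i s @ st_out s"

lemma mset_contents_qlg_step: "mset (contents (qlg_step s)) = mset (contents s)"
proof -
  have hd_tl: "xs \<noteq> [] \<Longrightarrow> add_mset (hd xs) (mset (tl xs)) = mset xs" for xs :: "nat list"
    by (cases xs) auto
  show ?thesis
    using qlg_op_cases[of s] qlg_op_facts[of s]
    by (elim insertE emptyE)
      (auto simp: contents_def qlg_step_sel d0_legal_iff d1_legal_iff d2_legal_iff hd_tl)
qed

definition qlg_inv :: "nat list \<Rightarrow> mstate \<Rightarrow> bool" where
  "qlg_inv p s \<longleftrightarrow> distinct (contents s) \<and> set (contents s) = set p \<and>
     sorted_wrt (>) (st_d1 s) \<and> sorted_wrt (>) (st_d2 s) \<and> sorted_wrt (<) (st_i s) \<and>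
     (\<exists>k. st_in s = drop k p)"

lemma qlg_inv_qlg_step:
  assumes "qlg_inv p s"
  shows "qlg_inv p (qlg_step s)"
proof -
  have "distinct (contents (qlg_step s))" "set (contents (qlg_step s)) = set p"
    using assms mset_contents_qlg_step[of s]
    by (auto simp: qlg_inv_def dest: mset_eq_setD mset_eq_imp_distinct_iff)
  moreover have "\<exists>k. st_in (qlg_step s) = drop k p"
    using assms by (auto simp: qlg_inv_def qlg_step_sel tl_drop drop_Suc[symmetric])
  moreover have "sorted_wrt (>) (st_d1 (qlg_step s)) \<and> sorted_wrt (>) (st_d2 (qlg_step s)) \<and>
      sorted_wrt (<) (st_i (qlg_step s))"
    using assms qlg_op_facts[of s]
    by (auto simp: qlg_inv_def qlg_step_sel d0_legal_iff d1_legal_iff d2_legal_iff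
        simp del: sorted_wrt.simps
        intro!: sorted_wrt_gt_Cons sorted_wrt_lt_Cons sorted_wrt_tl)
  ultimately show ?thesis by (simp add: qlg_inv_def)
qed

lemma qlg_inv_distinct_stacks:
  "qlg_inv p s \<Longrightarrow> distinct (st_d1 s) \<and> distinct (st_d2 s) \<and> distinct (st_i s)"
  by (simp add: qlg_inv_def contents_def)

text \<open>Places are numbered so that operation \<open>d\<^sub>k\<close> moves an element from place \<open>k\<close> to place \<open>k + 1\<close>.\<close>
definition place :: "mstate \<Rightarrow> nat \<Rightarrow> nat" where
  "place s e = (if e \<in> set (st_in s) then 0 else if e \<in> set (st_d1 s) then 1
     else if e \<in> set (st_d2 s) then 2 else if e \<in> set (st_i s) then 3 else 4)"

definition moved :: "mstate \<Rightarrow> nat" where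
  "moved s = (if qlg_op s = 0 then hd (st_in s) else if qlg_op s = 1 then hd (st_d1 s)
     else if qlg_op s = 2 then hd (st_d2 s) else hd (st_i s))"

lemma place_le_4: "place s e \<le> 4"
  by (simp add: place_def)

lemma place_eq_iff:
  assumes "qlg_inv p s" "e \<in> set p"
  shows "place s e = 0 \<longleftrightarrow> e \<in> set (st_in s)"
    "place s e = 1 \<longleftrightarrow> e \<in> set (st_d1 s)"
    "place s e = 2 \<longleftrightarrow> e \<in> set (st_d2 s)"
    "place s e = 3 \<longleftrightarrow> e \<in> set (st_i s)"
    "place s e = 4 \<longleftrightarrow> e \<in> set (st_out s)"
  using assms by (auto simp: place_def qlg_inv_def contents_def)

lemma place_qlg_step:
  assumes "distinct (contents s)"
  shows "place (qlg_step s) e = (if qlg_op s \<noteq> 4 \<and> e = moved s then Suc (place s e) else place s e)"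
  using assms qlg_op_cases[of s] qlg_op_facts[of s]
  by (auto simp: place_def moved_def contents_def qlg_step_sel d0_legal_iff d1_legal_iff
      d2_legal_iff distinct_in_set_tl_iff)

lemma place_moved:
  assumes "distinct (contents s)" "qlg_op s \<noteq> 4"
  shows "place s (moved s) = qlg_op s"
  using assms qlg_op_cases[of s] qlg_op_facts[of s]
  by (auto simp: place_def moved_def contents_def d0_legal_iff d1_legal_iff d2_legal_iff)

text \<open>\<open>y\<close> must enter \<open>I\<close> before \<open>x\<close> (in the last case \<open>d\<^sub>1\<close> is about to put it on top of
  \<open>x\<close>), but not while \<open>c\<close> is there; and \<open>c\<close> may be output only after \<open>x\<close>.\<close>
definition deadlock :: "nat \<Rightarrow> nat \<Rightarrow> nat \<Rightarrow> mstate \<Rightarrow> bool" where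
  "deadlock c x y s \<longleftrightarrow> c \<in> set (st_i s) \<and> x < c \<and> c < y \<and>
     (x \<in> set (st_d1 s) \<and> y \<in> set (st_d1 s) \<or> x \<in> set (st_d1 s) \<and> y \<in> set (st_d2 s) \<or>
      x \<in> set (st_d2 s) \<and> y \<in> set (st_d2 s) \<or> x \<in> set (st_d2 s) \<and> d1_legal s \<and> y = hd (st_d1 s))"

lemma deadlock_qlg_step:
  assumes inv: "qlg_inv p s" and dl: "deadlock c x y s" and keep: "qlg_op s = 3 \<Longrightarrow> hd (st_i s) \<noteq> c"
  shows "deadlock c x y (qlg_step s)"
proof -
  have dist: "distinct (st_d1 s)" "distinct (st_d2 s)" "distinct (st_i s)"
    using qlg_inv_distinct_stacks[OF inv] by auto
  have top1: "z \<in> set (st_d1 s) \<Longrightarrow> z \<le> hd (st_d1 s)"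
    and top2: "z \<in> set (st_d2 s) \<Longrightarrow> z \<le> hd (st_d2 s)"
    and bot: "z \<in> set (st_i s) \<Longrightarrow> hd (st_i s) \<le> z" for z
    using inv by (auto simp: qlg_inv_def intro: sorted_wrt_gt_le_hd sorted_wrt_lt_hd_le)
  have c: "c \<in> set (st_i s)" "x < c" "c < y"
    using dl by (auto simp: deadlock_def)
  consider "qlg_op s = 0" | "qlg_op s = 1" | "qlg_op s = 2" | "qlg_op s = 3" | "qlg_op s = 4"
    using qlg_op_cases[of s] by auto
  then show ?thesis
  proof cases
    case 1
    then show ?thesis using dl qlg_op_facts(1)[of s] by (auto simp: deadlock_def qlg_step_sel)
  next
    case 2
    have leg: "d1_legal s" using 2 by (rule qlg_op_facts)
    have "y \<in> set (st_d1 s) \<or> y \<in> set (st_d2 s)" using dl by (auto simp: deadlock_def d1_legal_iff)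
    then have "x \<noteq> hd (st_d1 s)"
      using c leg top1[of y] top2[of y] by (auto simp: d1_legal_iff)
    then show ?thesis
      using 2 dl dist(1) by (auto simp: deadlock_def qlg_step_sel distinct_in_set_tl_iff)
  next
    case 3
    have "d2_legal s" "\<not> d1_legal s" using 3 by (auto dest: qlg_op_facts)
    then have "hd (st_d2 s) < c" using c(1) bot[of c] by (auto simp: d2_legal_iff)
    then have "y \<noteq> hd (st_d2 s)" "y \<in> set (st_d2 s) \<Longrightarrow> x \<noteq> hd (st_d2 s)"
      using c top2[of y] by auto
    then show ?thesis
      using 3 dl \<open>\<not> d1_legal s\<close> dist(2)
      by (auto simp: deadlock_def qlg_step_sel distinct_in_set_tl_iff)
  next
    case 4
    then show ?thesis
      using dl keep dist(3)
      by (auto simp: deadlock_def qlg_step_sel d1_legal_iff distinct_in_set_tl_iff)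
  next
    case 5
    then show ?thesis using dl by (auto simp: deadlock_def qlg_step_sel d1_legal_iff)
  qed
qed

lemma d1_elem_below_d2_stays:
  assumes "qlg_inv p s" "z \<in> set (st_d1 s)" "w \<in> set (st_d2 s)" "z < w"
  shows "z \<in> set (st_d1 (qlg_step s))"
proof -
  have "z \<noteq> hd (st_d1 s)" if "qlg_op s = 1"
  proof
    assume "z = hd (st_d1 s)"
    then have "hd (st_d2 s) < z" using qlg_op_facts(2)[OF that] assms(3)
      by (auto simp: d1_legal_iff)
    then show False using sorted_wrt_gt_le_hd[of "st_d2 s" w] assms by (auto simp: qlg_inv_def)
  qed
  then show ?thesis
    using assms qlg_inv_distinct_stacks[OF assms(1)]
    by (auto simp: qlg_step_sel distinct_in_set_tl_iff)
qed

text \<open>When \<open>d\<^sub>2\<close> removes the top \<open>x\<close> of \<open>D\<^sub>2\<close> while input remains, \<open>d\<^sub>0\<close> and \<open>d\<^sub>1\<close> are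
  illegal, so the top of \<open>D\<^sub>1\<close> exists and is at most \<open>x\<close>.\<close>
lemma small_elem_in_d_stacks_step:
  assumes "qlg_inv p s" "st_in s \<noteq> []" "x \<in> set (st_d1 s) \<union> set (st_d2 s)" "x < c"
  shows "\<exists>x'. x' < c \<and> x' \<in> set (st_d1 (qlg_step s)) \<union> set (st_d2 (qlg_step s))"
proof (cases "qlg_op s = 2 \<and> x = hd (st_d2 s)")
  case True
  then have "\<not> d0_legal s" "\<not> d1_legal s" "st_d2 s \<noteq> []"
    using qlg_op_facts(3)[of s] by (auto simp: d2_legal_iff)
  then have "st_d1 s \<noteq> []" "hd (st_d1 s) \<le> x"
    using True assms(2) by (auto simp: d0_legal_iff d1_legal_iff)
  then show ?thesis using True assms(4)
    by (intro exI[of _ "hd (st_d1 s)"]) (auto simp: qlg_step_sel)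
next
  case False
  then have "x \<in> set (st_d1 (qlg_step s)) \<union> set (st_d2 (qlg_step s))"
    using assms(3) qlg_inv_distinct_stacks[OF assms(1)]
    by (auto simp: qlg_step_sel distinct_in_set_tl_iff)
  then show ?thesis using assms(4) by blast
qed

section \<open>Sorting runs\<close>

locale qlg_sorting =
  fixes p :: "nat list"
  assumes sortable: "qlg2_sortable p"
begin

definition S :: "nat \<Rightarrow> mstate" where
  "S t = (qlg_step ^^ t) (p, [], [], [], [])"

abbreviation T :: nat where
  "T \<equiv> 4 * length p"

abbreviation loc :: "nat \<Rightarrow> nat \<Rightarrow> nat" where
  "loc t e \<equiv> place (S t) e"

lemma S_0: "S 0 = (p, [], [], [], [])"
  by (simp add: S_def)

lemma S_Suc: "S (Suc t) = qlg_step (S t)"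
  by (simp add: S_def)

lemma distinct_p: "distinct p"
  using sortable by (simp add: qlg2_sortable_def is_perm_def)

lemma st_out_S_T: "st_out (S T) = sort p"
  using sortable
  by (auto simp: qlg2_sortable_def qlg_output_def S_def st_out_def split: prod.splits)

lemma qlg_inv_S: "qlg_inv p (S t)"
proof (induction t)
  case 0
  show ?case using distinct_p by (auto simp: S_0 qlg_inv_def contents_def intro: exI[of _ 0])
next
  case (Suc t)
  then show ?case by (simp add: S_Suc qlg_inv_qlg_step)
qed

lemma distinct_stacks: "distinct (st_d1 (S t))" "distinct (st_d2 (S t))" "distinct (st_i (S t))"
  using qlg_inv_distinct_stacks[OF qlg_inv_S] by auto

lemma le_hd_d1: "e \<in> set (st_d1 (S t)) \<Longrightarrow> e \<le> hd (st_d1 (S t))"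
  using qlg_inv_S[of t] by (auto simp: qlg_inv_def intro: sorted_wrt_gt_le_hd)

lemma le_hd_d2: "e \<in> set (st_d2 (S t)) \<Longrightarrow> e \<le> hd (st_d2 (S t))"
  using qlg_inv_S[of t] by (auto simp: qlg_inv_def intro: sorted_wrt_gt_le_hd)

lemma mem_state_imp_mem_p:
  "e \<in> set (st_in (S t)) \<or> e \<in> set (st_d1 (S t)) \<or> e \<in> set (st_d2 (S t)) \<or>
   e \<in> set (st_i (S t)) \<or> e \<in> set (st_out (S t)) \<Longrightarrow> e \<in> set p"
  using qlg_inv_S[of t] by (auto simp: qlg_inv_def contents_def)

lemma loc_eq_iff:
  assumes "e \<in> set p"
  shows "loc t e = 0 \<longleftrightarrow> e \<in> set (st_in (S t))" "loc t e = 1 \<longleftrightarrow> e \<in> set (st_d1 (S t))"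
    "loc t e = 2 \<longleftrightarrow> e \<in> set (st_d2 (S t))" "loc t e = 3 \<longleftrightarrow> e \<in> set (st_i (S t))"
    "loc t e = 4 \<longleftrightarrow> e \<in> set (st_out (S t))"
  using place_eq_iff[OF qlg_inv_S assms] by simp_all

lemma loc_in_stack:
  "e \<in> set (st_in (S t)) \<Longrightarrow> loc t e = 0" "e \<in> set (st_d1 (S t)) \<Longrightarrow> loc t e = 1"
  "e \<in> set (st_d2 (S t)) \<Longrightarrow> loc t e = 2" "e \<in> set (st_i (S t)) \<Longrightarrow> loc t e = 3"
  using loc_eq_iff[of e t] mem_state_imp_mem_p[of e t] by blast+

lemma loc_Suc:
  "loc (Suc t) e = loc t e \<or>
   loc (Suc t) e = Suc (loc t e) \<and> qlg_op (S t) = loc t e \<and> moved (S t) = e"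
  using place_qlg_step[of "S t" e] place_moved[of "S t"] qlg_inv_S[of t]
  by (auto simp: S_Suc qlg_inv_def)

lemma loc_Suc_eq_SucD: "loc (Suc t) e = Suc (loc t e) \<Longrightarrow> qlg_op (S t) = loc t e \<and> moved (S t) = e"
  using loc_Suc[of t e] by auto

lemma loc_mono: "t \<le> t' \<Longrightarrow> loc t e \<le> loc t' e"
proof (induction t' rule: dec_induct)
  case (step m)
  then show ?case using loc_Suc[of m e] by auto
qed simp

lemma loc_const_between: "t \<le> t' \<Longrightarrow> t' \<le> t'' \<Longrightarrow> loc t e = a \<Longrightarrow> loc t'' e = a \<Longrightarrow> loc t' e = a"
  using loc_mono[of t t' e] loc_mono[of t' t'' e] by simp

lemma loc_0: "e \<in> set p \<Longrightarrow> loc 0 e = 0"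
  by (simp add: S_0 place_def)

lemma loc_T: "e \<in> set p \<Longrightarrow> loc T e = 4"
  using loc_eq_iff(5)[of e T] st_out_S_T by simp

lemma loc_passes:
  assumes "loc t0 e \<le> a" "a < loc t1 e"
  obtains \<tau> where "t0 \<le> \<tau>" "\<tau> < t1" "loc \<tau> e = a" "loc (Suc \<tau>) e = Suc a"
proof -
  have "t0 \<le> t1" using assms loc_mono[of t1 t0 e] by fastforce
  then have "\<exists>\<tau>. t0 \<le> \<tau> \<and> \<tau> < t1 \<and> loc \<tau> e = a \<and> loc (Suc \<tau>) e = Suc a"
    using assms(2)
  proof (induction t1 rule: dec_induct)
    case base
    then show ?case using assms(1) by simp
  next
    case (step m)
    show ?case
    proof (cases "a < loc m e")
      case True
      then show ?thesis using step.IH less_SucI by blast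
    next
      case False
      then have "loc m e = a" "loc (Suc m) e = Suc a" using step.prems loc_Suc[of m e] by auto
      then show ?thesis using step.hyps by blast
    qed
  qed
  then show ?thesis using that by blast
qed

lemma st_out_prefix: "t \<le> t' \<Longrightarrow> \<exists>r. st_out (S t') = st_out (S t) @ r"
proof (induction t' rule: dec_induct)
  case (step m)
  then show ?case by (auto simp: S_Suc qlg_step_sel)
qed simp

lemma output_less_pending:
  assumes "t \<le> T" "a \<in> set p" "loc t a = 4" "e \<in> set p" "loc t e < 4"
  shows "a < e"
proof -
  obtain r where r: "st_out (S T) = st_out (S t) @ r" using st_out_prefix[OF assms(1)] by blast
  have a: "a \<in> set (st_out (S t))" using loc_eq_iff(5)[OF assms(2)] assms(3) by blast
  have "loc t e \<noteq> 4" using assms(5) by simp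
  then have e: "e \<notin> set (st_out (S t))" using loc_eq_iff(5)[OF assms(4)] by blast
  have "e \<in> set r" using e assms(4) st_out_S_T r by (metis Un_iff set_append set_sort)
  moreover have "sorted (st_out (S t) @ r)" using st_out_S_T r by simp
  ultimately have "a \<le> e" using a by (simp add: sorted_append)
  moreover have "a \<noteq> e" using a e by blast
  ultimately show ?thesis by simp
qed

lemma popped_less_pending:
  assumes "t < T" "qlg_op (S t) = 3" "x \<in> set p" "loc (Suc t) x < 4"
  shows "hd (st_i (S t)) < x"
proof -
  have "loc (Suc t) (moved (S t)) = 4"
    using place_qlg_step[of "S t" "moved (S t)"] place_moved[of "S t"] qlg_inv_S[of t] assms(2)
    by (auto simp: S_Suc qlg_inv_def)
  moreover have "moved (S t) = hd (st_i (S t))" using assms(2) by (simp add: moved_def)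
  moreover have "hd (st_i (S t)) \<in> set p"
    using qlg_op_facts(4)[OF assms(2)] mem_state_imp_mem_p[of "hd (st_i (S t))" t] by simp
  ultimately show ?thesis using output_less_pending[of "Suc t"] assms by auto
qed

lemma st_i_elem_stays:
  assumes "t < T" "c \<in> set (st_i (S t))" "x \<in> set p" "loc (Suc t) x < 4" "x < c"
  shows "c \<in> set (st_i (S (Suc t)))"
proof -
  have "qlg_op (S t) = 3 \<Longrightarrow> hd (st_i (S t)) \<noteq> c"
    using popped_less_pending[OF assms(1) _ assms(3,4)] assms(5) by auto
  then show ?thesis
    using assms(2) distinct_stacks(3)[of t]
    by (auto simp: S_Suc qlg_step_sel distinct_in_set_tl_iff)
qed

lemma no_deadlock:
  assumes "t \<le> T"
  shows "\<not> deadlock c x y (S t)"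
proof
  assume dl: "deadlock c x y (S t)"
  have "deadlock c x y (S \<tau>)" if "t \<le> \<tau>" "\<tau> \<le> T" for \<tau>
    using that
  proof (induction \<tau> rule: dec_induct)
    case (step \<sigma>)
    then have dl\<sigma>: "deadlock c x y (S \<sigma>)" by simp
    then have x: "x \<in> set p" "loc \<sigma> x \<le> 2"
      using mem_state_imp_mem_p loc_in_stack by (auto simp: deadlock_def)
    then have "loc (Suc \<sigma>) x < 4" using loc_Suc[of \<sigma> x] by auto
    then have "qlg_op (S \<sigma>) = 3 \<Longrightarrow> hd (st_i (S \<sigma>)) < x"
      using popped_less_pending[of \<sigma> x] step.prems x(1) by simp
    then have "qlg_op (S \<sigma>) = 3 \<Longrightarrow> hd (st_i (S \<sigma>)) \<noteq> c"
      using dl\<sigma> by (auto simp: deadlock_def)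
    then show ?case using deadlock_qlg_step[OF qlg_inv_S dl\<sigma>] by (simp add: S_Suc)
  qed (use dl in simp)
  then have "deadlock c x y (S T)" using assms by simp
  then have "x \<in> set p" "loc T x \<le> 2"
    using mem_state_imp_mem_p loc_in_stack by (auto simp: deadlock_def)
  then show False using loc_T[of x] by simp
qed

definition nread :: "nat \<Rightarrow> nat" where
  "nread t = length p - length (st_in (S t))"

lemma st_in_S: "st_in (S t) = drop (nread t) p"
proof -
  obtain k where k: "st_in (S t) = drop k p" using qlg_inv_S[of t] by (auto simp: qlg_inv_def)
  then show ?thesis by (cases "k \<le> length p") (simp_all add: nread_def)
qed

lemma loc_nth_eq_0_iff: "j < length p \<Longrightarrow> loc t (p ! j) = 0 \<longleftrightarrow> nread t \<le> j"
  using loc_eq_iff(1)[of "p ! j" t] st_in_S distinct_nth_in_set_drop_iff[OF distinct_p] by simp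

lemma loc_nth_ne_0: "j < nread t \<Longrightarrow> loc t (p ! j) \<noteq> 0"
  using loc_nth_eq_0_iff[of j t] nread_def by (metis diff_le_self le_less_trans not_le)

lemma hd_st_in: "st_in (S t) \<noteq> [] \<Longrightarrow> nread t < length p \<and> hd (st_in (S t)) = p ! nread t"
  using st_in_S[of t] by (metis drop_all hd_drop_conv_nth not_le)

lemma nth_eq_iff: "i < length p \<Longrightarrow> j < length p \<Longrightarrow> p ! i = p ! j \<longleftrightarrow> i = j"
  using distinct_p by (simp add: nth_eq_iff_index_eq)

definition reads :: "nat \<Rightarrow> nat \<Rightarrow> bool" where
  "reads \<tau> j \<longleftrightarrow> \<tau> < T \<and> qlg_op (S \<tau>) = 0 \<and> nread \<tau> = j"

lemma readsD:
  assumes "reads \<tau> j"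
  shows "j < length p" "loc \<tau> (p ! j) = 0" "loc (Suc \<tau>) (p ! j) = 1" "hd (st_in (S \<tau>)) = p ! j"
    "st_d1 (S \<tau>) = [] \<or> hd (st_d1 (S \<tau>)) < p ! j"
    "st_d1 (S (Suc \<tau>)) = p ! j # st_d1 (S \<tau>)" "st_d2 (S (Suc \<tau>)) = st_d2 (S \<tau>)"
    "st_i (S (Suc \<tau>)) = st_i (S \<tau>)" "st_in (S (Suc \<tau>)) = drop (Suc j) p"
proof -
  have op: "qlg_op (S \<tau>) = 0" and j: "nread \<tau> = j" using assms by (auto simp: reads_def)
  have leg: "d0_legal (S \<tau>)" using qlg_op_facts(1)[OF op] by simp
  then have "st_in (S \<tau>) \<noteq> []" by (simp add: d0_legal_iff)
  then show jl: "j < length p" and hd: "hd (st_in (S \<tau>)) = p ! j" using hd_st_in j by auto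
  show "st_d1 (S \<tau>) = [] \<or> hd (st_d1 (S \<tau>)) < p ! j" using leg hd by (simp add: d0_legal_iff)
  show "st_d1 (S (Suc \<tau>)) = p ! j # st_d1 (S \<tau>)" "st_d2 (S (Suc \<tau>)) = st_d2 (S \<tau>)"
    "st_i (S (Suc \<tau>)) = st_i (S \<tau>)" using op hd by (simp_all add: S_Suc qlg_step_sel)
  show "st_in (S (Suc \<tau>)) = drop (Suc j) p"
    using op st_in_S[of \<tau>] j by (simp add: S_Suc qlg_step_sel drop_Suc tl_drop)
  show "loc \<tau> (p ! j) = 0" using loc_nth_eq_0_iff[OF jl] j by simp
  show "loc (Suc \<tau>) (p ! j) = 1"
    using loc_eq_iff(2)[of "p ! j" "Suc \<tau>"] jl \<open>st_d1 (S (Suc \<tau>)) = p ! j # st_d1 (S \<tau>)\<close> by simp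
qed

lemma reads_exists:
  assumes "j < length p"
  obtains \<tau> where "reads \<tau> j"
proof -
  have e: "p ! j \<in> set p" using assms by simp
  obtain \<tau> where \<tau>: "\<tau> < T" "loc \<tau> (p ! j) = 0" "loc (Suc \<tau>) (p ! j) = 1"
    using loc_passes[of 0 "p ! j" 0 T] loc_0[OF e] loc_T[OF e] by auto
  have op: "qlg_op (S \<tau>) = 0" and mv: "moved (S \<tau>) = p ! j"
    using loc_Suc_eq_SucD[of \<tau> "p ! j"] \<tau> by auto
  have "st_in (S \<tau>) \<noteq> []" using qlg_op_facts(1)[OF op] by (simp add: d0_legal_iff)
  then have "nread \<tau> = j" using hd_st_in op mv nth_eq_iff assms by (metis moved_def)
  then show ?thesis using that \<tau>(1) op by (simp add: reads_def)
qed

lemma reads_before: "reads \<tau> j \<Longrightarrow> j < nread t \<Longrightarrow> \<tau> < t"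
  using readsD(2)[of \<tau> j] loc_nth_ne_0[of j t] loc_mono[of t \<tau> "p ! j"] by (cases "t \<le> \<tau>") auto

lemma reads_after: "reads \<tau> j \<Longrightarrow> nread t \<le> j \<Longrightarrow> t \<le> \<tau>"
  using readsD(1,3)[of \<tau> j] loc_nth_eq_0_iff[of j t] loc_mono[of "Suc \<tau>" t "p ! j"]
  by (cases "Suc \<tau> \<le> t") auto

lemma small_elem_below_i_elem_persists:
  assumes "t \<le> \<tau>" "\<tau> < T" "d \<in> set p" "loc \<tau> d = 0"
    and "c \<in> set (st_i (S t))" "x \<in> set (st_d1 (S t)) \<union> set (st_d2 (S t))" "x < c"
  obtains x' where "x' < c" "x' \<in> set (st_d1 (S (Suc \<tau>))) \<union> set (st_d2 (S (Suc \<tau>)))"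
    "c \<in> set (st_i (S (Suc \<tau>)))"
proof -
  have "c \<in> set (st_i (S \<tau>')) \<and> (\<exists>x'. x' < c \<and> x' \<in> set (st_d1 (S \<tau>')) \<union> set (st_d2 (S \<tau>')))"
    if "t \<le> \<tau>'" "\<tau>' \<le> Suc \<tau>" for \<tau>'
    using that
  proof (induction \<tau>' rule: dec_induct)
    case (step \<sigma>)
    then obtain x' where x': "x' < c" "x' \<in> set (st_d1 (S \<sigma>)) \<union> set (st_d2 (S \<sigma>))"
      and c: "c \<in> set (st_i (S \<sigma>))" by auto
    have "loc \<sigma> d = 0" using loc_mono[of \<sigma> \<tau> d] step.prems assms(4) by simp
    then have "st_in (S \<sigma>) \<noteq> []" using loc_eq_iff(1)[OF assms(3)] by auto
    then have "\<exists>x''. x'' < c \<and> x'' \<in> set (st_d1 (S (Suc \<sigma>))) \<union> set (st_d2 (S (Suc \<sigma>)))"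
      using small_elem_in_d_stacks_step[OF qlg_inv_S _ x'(2,1)] by (simp add: S_Suc)
    moreover have "x' \<in> set p" "loc \<sigma> x' \<le> 2" using x'(2) mem_state_imp_mem_p loc_in_stack by auto
    then have "c \<in> set (st_i (S (Suc \<sigma>)))"
      using st_i_elem_stays[OF _ c, of x'] loc_Suc[of \<sigma> x'] step.prems assms(2) x'(1) by fastforce
    ultimately show ?case by blast
  qed (use assms(5-7) in blast)
  from this[of "Suc \<tau>"] assms(1) show ?thesis using that by auto
qed

text \<open>Once an element \<open>c\<close> of \<open>I\<close> lies above a smaller element of the \<open>D\<close>-stacks, no element
  larger than \<open>c\<close> may still be unread: reading it onto \<open>D\<^sub>1\<close> produces a deadlock.\<close>
lemma no_unread_above_blocked:
  assumes "t \<le> T" "c \<in> set (st_i (S t))" "x \<in> set (st_d1 (S t)) \<union> set (st_d2 (S t))" "x < c"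
    and "d \<in> set (st_in (S t))" "c < d"
  shows False
proof -
  have dp: "d \<in> set p" using assms(5) mem_state_imp_mem_p by blast
  obtain \<tau> where \<tau>: "t \<le> \<tau>" "\<tau> < T" "loc \<tau> d = 0" "loc (Suc \<tau>) d = 1"
    using loc_passes[of t d 0 T] loc_in_stack(1)[OF assms(5)] loc_T[OF dp] by auto
  have op: "qlg_op (S \<tau>) = 0" "moved (S \<tau>) = d" using loc_Suc_eq_SucD[of \<tau> d] \<tau> by auto
  have "d \<in> set (st_d1 (S (Suc \<tau>)))" using loc_eq_iff(2)[OF dp] \<tau>(4) by simp
  obtain x' where x': "x' < c" "x' \<in> set (st_d1 (S (Suc \<tau>))) \<union> set (st_d2 (S (Suc \<tau>)))"
    and c: "c \<in> set (st_i (S (Suc \<tau>)))"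
    using small_elem_below_i_elem_persists[OF \<tau>(1,2) dp \<tau>(3) assms(2-4)] by blast
  have d1: "st_d1 (S (Suc \<tau>)) = d # st_d1 (S \<tau>)" "st_d2 (S (Suc \<tau>)) = st_d2 (S \<tau>)"
    using op by (simp_all add: S_Suc qlg_step_sel moved_def)
  have "deadlock c x' d (S (Suc \<tau>)) \<or> deadlock c x' (hd (st_d2 (S (Suc \<tau>)))) (S (Suc \<tau>))"
  proof (cases "x' \<in> set (st_d1 (S (Suc \<tau>)))")
    case True
    then show ?thesis using x' c assms(6) d1 by (auto simp: deadlock_def)
  next
    case False
    then have x'2: "x' \<in> set (st_d2 (S (Suc \<tau>)))" using x' by auto
    then have hd2: "hd (st_d2 (S (Suc \<tau>))) \<in> set (st_d2 (S (Suc \<tau>)))"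
      by (cases "st_d2 (S (Suc \<tau>))") auto
    then have "hd (st_d2 (S (Suc \<tau>))) \<noteq> c" using c loc_in_stack(3,4)[of _ "Suc \<tau>"] by force
    then consider "hd (st_d2 (S (Suc \<tau>))) < c" | "c < hd (st_d2 (S (Suc \<tau>)))" by linarith
    then show ?thesis
    proof cases
      case 1
      then show ?thesis using x'2 c x' assms(6) d1 by (auto simp: deadlock_def d1_legal_iff)
    next
      case 2
      then show ?thesis using x'2 c x' hd2 by (auto simp: deadlock_def)
    qed
  qed
  then show False using no_deadlock[of "Suc \<tau>"] \<tau>(2) by auto
qed

lemma read_larger_elem_in_d2_or_i:
  assumes "reads \<tau> j" "e \<in> set p" "loc \<tau> e \<noteq> 0" "p ! j < e"
  shows "e \<in> set (st_d2 (S \<tau>)) \<or> e \<in> set (st_i (S \<tau>))"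
proof -
  have "p ! j \<in> set p" "loc \<tau> (p ! j) = 0" using readsD(1,2)[OF assms(1)] by auto
  then have "loc \<tau> e \<noteq> 4"
    using output_less_pending[of \<tau> e "p ! j"] assms(1,2,4) by (auto simp: reads_def)
  moreover have "loc \<tau> e \<noteq> 1"
  proof
    assume "loc \<tau> e = 1"
    then have "e \<le> hd (st_d1 (S \<tau>))" "st_d1 (S \<tau>) \<noteq> []"
      using loc_eq_iff(2)[OF assms(2)] le_hd_d1 by auto
    then show False using readsD(5)[OF assms(1)] assms(4) by simp
  qed
  ultimately have "loc \<tau> e = 2 \<or> loc \<tau> e = 3" using assms(3) place_le_4[of "S \<tau>" e] by linarith
  then show ?thesis using loc_eq_iff(3,4)[OF assms(2)] by auto
qed

lemma i_or_d2_over_d1_persists: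
  assumes "t \<le> t'" "t' \<le> T" "a \<in> set p" "loc t' a = 0" "a < c" "b < c"
    and "c \<in> set (st_i (S t)) \<or> c \<in> set (st_d2 (S t)) \<and> b \<in> set (st_d1 (S t))"
  shows "c \<in> set (st_i (S t')) \<or> c \<in> set (st_d2 (S t')) \<and> b \<in> set (st_d1 (S t'))"
  using assms(1,2,4,7)
proof (induction t' rule: dec_induct)
  case (step \<sigma>)
  have "loc \<sigma> a = 0" using loc_mono[of \<sigma> "Suc \<sigma>" a] step.prems by simp
  then have IH: "c \<in> set (st_i (S \<sigma>)) \<or> c \<in> set (st_d2 (S \<sigma>)) \<and> b \<in> set (st_d1 (S \<sigma>))"
    using step.IH step.prems by simp
  show ?case
  proof (cases "c \<in> set (st_i (S \<sigma>))")
    case True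
    then show ?thesis using st_i_elem_stays[OF _ True assms(3) _ assms(5)] step.prems by simp
  next
    case False
    then have c: "c \<in> set (st_d2 (S \<sigma>))" and b: "b \<in> set (st_d1 (S \<sigma>))" using IH by auto
    have "b \<in> set (st_d1 (S (Suc \<sigma>)))"
      using d1_elem_below_d2_stays[OF qlg_inv_S b c assms(6)] by (simp add: S_Suc)
    moreover have "c \<in> set (st_d2 (S (Suc \<sigma>))) \<or> c \<in> set (st_i (S (Suc \<sigma>)))"
      using c distinct_stacks(2)[of \<sigma>] by (auto simp: S_Suc qlg_step_sel distinct_in_set_tl_iff)
    ultimately show ?thesis by blast
  qed
qed simp

lemma d1_elem_under_d2_elem_persists:
  assumes "\<tau> \<le> \<tau>'" "z \<in> set (st_d1 (S \<tau>))" "w \<in> set (st_d2 (S \<tau>))" "z < w" "w \<in> set (st_d2 (S \<tau>'))"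
  shows "z \<in> set (st_d1 (S \<tau>'))"
  using assms(1)
proof (induction \<tau>' rule: dec_induct)
  case (step \<sigma>)
  have "loc \<sigma> w = 2"
    using loc_const_between[of \<tau> \<sigma> \<tau>' w 2] step.hyps loc_in_stack(3) assms(3,5) by simp
  then have "w \<in> set (st_d2 (S \<sigma>))" using loc_eq_iff(3) assms(3) mem_state_imp_mem_p by blast
  then show ?case using d1_elem_below_d2_stays[OF qlg_inv_S step.IH _ assms(4)] by (simp add: S_Suc)
qed (use assms(2) in simp)

text \<open>Only \<open>d\<^sub>3\<close> can precede the move of a legal top \<open>y\<close> of \<open>D\<^sub>1\<close>, and it changes neither \<open>D\<close>-stack.\<close>
lemma legal_d1_top_stays_legal:
  assumes "\<sigma>0 \<le> \<sigma>" "d1_legal (S \<sigma>0)" "hd (st_d1 (S \<sigma>0)) = y" "loc \<sigma> y \<le> 1"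
  shows "d1_legal (S \<sigma>) \<and> hd (st_d1 (S \<sigma>)) = y"
  using assms(1,4)
proof (induction \<sigma> rule: dec_induct)
  case (step \<sigma>)
  have IH: "d1_legal (S \<sigma>)" "hd (st_d1 (S \<sigma>)) = y"
    using step.IH loc_mono[of \<sigma> "Suc \<sigma>" y] step.prems by auto
  have "qlg_op (S \<sigma>) \<noteq> 1"
  proof
    assume op: "qlg_op (S \<sigma>) = 1"
    then have "moved (S \<sigma>) = y" "loc \<sigma> (moved (S \<sigma>)) = 1"
      using IH place_moved[of "S \<sigma>"] qlg_inv_S[of \<sigma>] by (auto simp: moved_def qlg_inv_def)
    then show False
      using place_qlg_step[of "S \<sigma>" y] qlg_inv_S[of \<sigma>] op step.prems
      by (auto simp: S_Suc qlg_inv_def)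
  qed
  then have "qlg_op (S \<sigma>) = 3" using qlg_op_facts(5)[OF IH(1)] by simp
  then show ?case using IH by (simp add: S_Suc qlg_step_sel d1_legal_iff)
qed (use assms(2,3) in simp)

lemma reads_unique: "reads \<tau> j \<Longrightarrow> reads \<tau>' j \<Longrightarrow> \<tau> = \<tau>'"
  using reads_after[of \<tau> j \<tau>'] reads_after[of \<tau>' j \<tau>] by (simp add: reads_def)

lemma stacks_unchanged_by_outputs:
  assumes "t \<le> t'" "\<And>\<sigma>. t \<le> \<sigma> \<Longrightarrow> \<sigma> < t' \<Longrightarrow> qlg_op (S \<sigma>) \<notin> {0, 1, 2}"
  shows "st_in (S t') = st_in (S t) \<and> st_d1 (S t') = st_d1 (S t) \<and> st_d2 (S t') = st_d2 (S t)"
  using assms(1)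
proof (induction t' rule: dec_induct)
  case (step \<sigma>)
  then show ?case using assms(2)[of \<sigma>] by (simp add: S_Suc qlg_step_sel)
qed simp

lemma loc_le_2_without_d2:
  assumes "t0 \<le> t1" "\<And>\<sigma>. t0 \<le> \<sigma> \<Longrightarrow> \<sigma> < t1 \<Longrightarrow> qlg_op (S \<sigma>) \<noteq> 2" "loc t0 e \<le> 2"
  shows "loc t1 e \<le> 2"
proof (rule ccontr)
  assume "\<not> loc t1 e \<le> 2"
  then obtain \<sigma> where "t0 \<le> \<sigma>" "\<sigma> < t1" "loc \<sigma> e = 2" "loc (Suc \<sigma>) e = 3"
    using loc_passes[of t0 e 2 t1] assms(3) by (metis eval_nat_numeral(3) not_le)
  then show False using loc_Suc_eq_SucD[of \<sigma> e] assms(2) by simp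
qed

end

section \<open>Avoiding 3214\<close>

lemma occurrence_3214E:
  assumes "occurrence p [3, 2, 1, 4] js"
  obtains j1 j2 j3 j4 where "j1 < j2" "j2 < j3" "j3 < j4" "j4 < length p"
    "p ! j3 < p ! j2" "p ! j2 < p ! j1" "p ! j1 < p ! j4"
proof -
  obtain j1 j2 j3 j4 where js: "js = [j1, j2, j3, j4]"
    using assms by (auto simp: occurrence_def numeral_eq_Suc length_Suc_conv)
  have val: "\<forall>a<4. \<forall>b<4. p ! (js ! a) < p ! (js ! b) \<longleftrightarrow> [3, 2, 1, 4 :: nat] ! a < [3, 2, 1, 4] ! b"
    using assms by (simp add: occurrence_def)
  show ?thesis
  proof (rule that[of j1 j2 j3 j4])
    show "p ! j3 < p ! j2" "p ! j2 < p ! j1" "p ! j1 < p ! j4"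
      using val[rule_format, of 2 1] val[rule_format, of 1 0] val[rule_format, of 0 3]
      by (simp_all add: js)
    show "j1 < j2" "j2 < j3" "j3 < j4" "j4 < length p" using assms by (auto simp: occurrence_def js)
  qed
qed

theorem (in qlg_sorting) avoids_3214: "\<not> contains p [3, 2, 1, 4]"
proof
  assume "contains p [3, 2, 1, 4]"
  then obtain js where "occurrence p [3, 2, 1, 4] js" by (auto simp: contains_def)
  then obtain j1 j2 j3 j4 where j: "j1 < j2" "j2 < j3" "j3 < j4" "j4 < length p"
    and v: "p ! j3 < p ! j2" "p ! j2 < p ! j1" "p ! j1 < p ! j4"
    by (rule occurrence_3214E)
  define a b c d where "a = p ! j3" "b = p ! j2" "c = p ! j1" "d = p ! j4"
  have mem: "a \<in> set p" "b \<in> set p" "c \<in> set p" "d \<in> set p" using j by (auto simp: a_b_c_d_def)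
  obtain \<tau>a \<tau>b where ra: "reads \<tau>a j3" and rb: "reads \<tau>b j2"
    using reads_exists j by (meson less_trans)
  have "\<tau>b < \<tau>a" using reads_before[OF rb] j(2) ra by (simp add: reads_def)
  have "c \<in> set (st_d2 (S \<tau>b)) \<or> c \<in> set (st_i (S \<tau>b))"
  proof (rule read_larger_elem_in_d2_or_i[OF rb mem(3)])
    show "loc \<tau>b c \<noteq> 0" using loc_nth_ne_0 rb j(1) by (simp add: reads_def a_b_c_d_def)
    show "p ! j2 < c" using v by (simp add: a_b_c_d_def)
  qed
  then have "c \<in> set (st_i (S (Suc \<tau>b))) \<or>
      c \<in> set (st_d2 (S (Suc \<tau>b))) \<and> b \<in> set (st_d1 (S (Suc \<tau>b)))"
    using readsD(6-8)[OF rb] by (auto simp: a_b_c_d_def)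
  then have "c \<in> set (st_i (S \<tau>a)) \<or> c \<in> set (st_d2 (S \<tau>a)) \<and> b \<in> set (st_d1 (S \<tau>a))"
    using i_or_d2_over_d1_persists[of "Suc \<tau>b" \<tau>a a c b] \<open>\<tau>b < \<tau>a\<close> ra readsD(2)[OF ra] mem v
    by (auto simp: reads_def a_b_c_d_def)
  moreover have "b \<notin> set (st_d1 (S \<tau>a))"
    using le_hd_d1[of b \<tau>a] readsD(5)[OF ra] v by (auto simp: a_b_c_d_def)
  ultimately have "c \<in> set (st_i (S (Suc \<tau>a)))" using readsD(8)[OF ra] by simp
  moreover have "d \<in> set (st_in (S (Suc \<tau>a)))"
    using readsD(9)[OF ra] distinct_nth_in_set_drop_iff[OF distinct_p] j by (simp add: a_b_c_d_def)
  moreover have "a \<in> set (st_d1 (S (Suc \<tau>a)))" using readsD(6)[OF ra] by (simp add: a_b_c_d_def)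
  ultimately show False
    using no_unread_above_blocked[of "Suc \<tau>a" c a d] ra v by (auto simp: reads_def a_b_c_d_def)
qed

section \<open>Occurrences of 52314\<close>

locale occ_52314 = qlg_sorting +
  fixes q5 q2 q3 q1 q4 \<tau>1 :: nat
  assumes pos: "q5 < q2" "q2 < q3" "q3 < q1" "q1 < q4" "q4 < length p"
    and val: "p ! q1 < p ! q2" "p ! q2 < p ! q3" "p ! q3 < p ! q4" "p ! q4 < p ! q5"
    and reads_A1: "reads \<tau>1 q1"
begin

abbreviation "A1 \<equiv> p ! q1"
abbreviation "A2 \<equiv> p ! q2"
abbreviation "A3 \<equiv> p ! q3"
abbreviation "A4 \<equiv> p ! q4"
abbreviation "A5 \<equiv> p ! q5"

lemma mem_A: "A1 \<in> set p" "A2 \<in> set p" "A3 \<in> set p" "A4 \<in> set p" "A5 \<in> set p"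
  using pos by auto

lemma \<tau>1_less_T: "\<tau>1 < T"
  using reads_A1 by (simp add: reads_def)

lemma d1_elem_under_d2_less_A1:
  assumes "\<tau> \<le> \<tau>1" "z \<in> set (st_d1 (S \<tau>))" "w \<in> set (st_d2 (S \<tau>))" "z < w" "w \<in> set (st_d2 (S \<tau>1))"
  shows "z < A1"
  using d1_elem_under_d2_elem_persists[OF assms] le_hd_d1[of z \<tau>1] readsD(5)[OF reads_A1] by auto

lemma no_i_elem_between_A1_A4: "c \<in> set (st_i (S \<tau>1)) \<Longrightarrow> A1 < c \<Longrightarrow> c < A4 \<Longrightarrow> False"
  using no_unread_above_blocked[of "Suc \<tau>1" c A1 A4] readsD(6,8,9)[OF reads_A1] \<tau>1_less_T
    distinct_nth_in_set_drop_iff[OF distinct_p, of q4 "Suc q1"] pos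
  by simp

lemma read_before_A1_in_d2_or_i:
  "q < q1 \<Longrightarrow> A1 < p ! q \<Longrightarrow> p ! q \<in> set (st_d2 (S \<tau>1)) \<or> p ! q \<in> set (st_i (S \<tau>1))"
  using read_larger_elem_in_d2_or_i[OF reads_A1, of "p ! q"] loc_nth_ne_0[of q \<tau>1] reads_A1 pos
  by (simp add: reads_def)

lemma A3_in_d2: "A3 \<in> set (st_d2 (S \<tau>1))"
  using read_before_A1_in_d2_or_i[of q3] no_i_elem_between_A1_A4[of A3] pos val by auto

lemma A2_in_d2: "A2 \<in> set (st_d2 (S \<tau>1))"
proof -
  have "A2 \<notin> set (st_i (S \<tau>1))"
  proof
    assume "A2 \<in> set (st_i (S \<tau>1))"
    then have "deadlock A2 A1 A3 (S (Suc \<tau>1))"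
      using readsD(6-8)[OF reads_A1] A3_in_d2 val(1,2) by (simp add: deadlock_def)
    then show False using no_deadlock[of "Suc \<tau>1"] \<tau>1_less_T by simp
  qed
  then show ?thesis using read_before_A1_in_d2_or_i[of q2] pos val by auto
qed

lemma A2_moves_to_d2:
  obtains \<tau>2 m2 where "reads \<tau>2 q2" "m2 < \<tau>1" "loc m2 A2 = 1" "loc (Suc m2) A2 = 2"
proof -
  obtain \<tau>2 where r: "reads \<tau>2 q2" using reads_exists pos by (meson less_trans)
  have "loc (Suc \<tau>2) A2 \<le> 1" "1 < loc \<tau>1 A2"
    using readsD(3)[OF r] A2_in_d2 loc_in_stack(3) by auto
  then obtain m2 where "m2 < \<tau>1" "loc m2 A2 = 1" "loc (Suc m2) A2 = Suc 1"
    using loc_passes[of "Suc \<tau>2" A2 1 \<tau>1] by blast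
  with r show ?thesis using that by simp
qed

end

locale occ_52314_m2 = occ_52314 +
  fixes \<tau>2 m2 :: nat
  assumes reads_A2: "reads \<tau>2 q2"
    and m2: "m2 < \<tau>1" "loc m2 A2 = 1" "loc (Suc m2) A2 = 2"
begin

lemma m2_moves_A2: "qlg_op (S m2) = 1" "hd (st_d1 (S m2)) = A2"
  using loc_Suc_eq_SucD[of m2 A2] m2 by (auto simp: moved_def)

lemma m2_d1_legal: "st_d1 (S m2) \<noteq> []" "st_d2 (S m2) = [] \<or> hd (st_d2 (S m2)) < A2"
  using qlg_op_facts(2)[OF m2_moves_A2(1)] m2_moves_A2(2) by (auto simp: d1_legal_iff)

lemma A2_in_d1_at_m2: "A2 \<in> set (st_d1 (S m2))"
  using m2_d1_legal(1) m2_moves_A2(2) hd_in_set by fastforce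

lemma \<tau>2_less_m2: "\<tau>2 < m2"
  using readsD(2)[OF reads_A2] loc_mono[of m2 \<tau>2 A2] m2(2) by (cases "m2 \<le> \<tau>2") auto

lemma A2_in_d2_after_m2: "Suc m2 \<le> \<sigma> \<Longrightarrow> \<sigma> \<le> \<tau>1 \<Longrightarrow> A2 \<in> set (st_d2 (S \<sigma>))"
  using loc_const_between[of "Suc m2" \<sigma> \<tau>1 A2 2] m2 A2_in_d2 loc_in_stack(3)
    loc_eq_iff(3)[OF mem_A(2)]
  by blast

lemma A3_unread_at_m2: "loc m2 A3 = 0"
proof -
  have "loc m2 A3 \<le> 2" using loc_mono[of m2 \<tau>1 A3] m2(1) A3_in_d2 loc_in_stack(3) by fastforce
  moreover have "loc m2 A3 \<noteq> 1"
    using loc_eq_iff(2)[OF mem_A(3)] le_hd_d1[of A3 m2] m2_moves_A2(2) val(2) by fastforce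
  moreover have "loc m2 A3 \<noteq> 2"
  proof
    assume "loc m2 A3 = 2"
    then have "A3 \<in> set (st_d2 (S m2))" using loc_eq_iff(3)[OF mem_A(3)] by simp
    then show False
      using d1_elem_under_d2_less_A1[OF _ A2_in_d1_at_m2 _ val(2) A3_in_d2] m2(1) val(1) by simp
  qed
  ultimately show ?thesis by linarith
qed

lemma nread_m2: "q2 < nread m2" "nread m2 \<le> q3"
  using loc_nth_eq_0_iff[of q2 m2] loc_nth_eq_0_iff[of q3 m2] A3_unread_at_m2 m2(2) pos by auto

lemma st_in_m2_ne: "st_in (S m2) \<noteq> []"
  using A3_unread_at_m2 loc_eq_iff(1)[OF mem_A(3)] by auto

lemma last_stack_step_before_m2:
  obtains m' where "m' < m2" "qlg_op (S m') \<in> {0, 1, 2}" "st_in (S m2) = st_in (S (Suc m'))"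
    "st_d1 (S m2) = st_d1 (S (Suc m'))" "st_d2 (S m2) = st_d2 (S (Suc m'))"
proof -
  have "qlg_op (S \<tau>2) \<in> {0, 1, 2}" using reads_A2 by (simp add: reads_def)
  then obtain m' where m': "\<tau>2 \<le> m'" "m' < m2" "qlg_op (S m') \<in> {0, 1, 2}"
    "\<And>\<sigma>. m' < \<sigma> \<Longrightarrow> \<sigma> < m2 \<Longrightarrow> qlg_op (S \<sigma>) \<notin> {0, 1, 2}"
    using last_index_with[of "\<lambda>\<sigma>. qlg_op (S \<sigma>) \<in> {0, 1, 2}" \<tau>2 m2] \<tau>2_less_m2 by blast
  then show ?thesis
    using that stacks_unchanged_by_outputs[of "Suc m'" m2] by auto
qed

lemma A2_move_cases:
  obtains (next_smaller) "hd (st_in (S m2)) < A2"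
  | (direct) "st_d1 (S m2) = A2 # st_d1 (S \<tau>2)" "st_d2 (S m2) = st_d2 (S \<tau>2)"
proof -
  obtain m' where m': "m' < m2" "qlg_op (S m') \<in> {0, 1, 2}"
    and eq: "st_in (S m2) = st_in (S (Suc m'))" "st_d1 (S m2) = st_d1 (S (Suc m'))"
      "st_d2 (S m2) = st_d2 (S (Suc m'))"
    by (rule last_stack_step_before_m2)
  consider "qlg_op (S m') = 0" | "qlg_op (S m') = 1" | "qlg_op (S m') = 2" using m'(2) by auto
  then show ?thesis
  proof cases
    case 1
    then have hd: "hd (st_in (S m')) = A2" using eq m2_moves_A2(2) by (simp add: S_Suc qlg_step_sel)
    have "st_in (S m') \<noteq> []" using qlg_op_facts(1)[OF 1] by (simp add: d0_legal_iff)
    then have "nread m' = q2" using hd_st_in[of m'] hd nth_eq_iff[of "nread m'" q2] pos by auto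
    then have "reads m' q2" using 1 m'(1) m2(1) \<tau>1_less_T by (simp add: reads_def)
    then have "m' = \<tau>2" using reads_unique[OF reads_A2] by simp
    then show ?thesis using direct eq 1 hd by (simp add: S_Suc qlg_step_sel)
  next
    case 2
    have "st_d1 (S m') \<noteq> []" using qlg_op_facts(2)[OF 2] by (simp add: d1_legal_iff)
    have "A2 \<in> set (tl (st_d1 (S m')))" using eq A2_in_d1_at_m2 2 by (simp add: S_Suc qlg_step_sel)
    then have "A2 \<in> set (st_d1 (S m'))" "A2 \<noteq> hd (st_d1 (S m'))"
      using distinct_in_set_tl_iff[OF distinct_stacks(1)] by auto
    then have "A2 < hd (st_d1 (S m'))" using le_hd_d1[of A2 m'] by linarith
    moreover have "hd (st_d1 (S m')) < A2" using eq m2_d1_legal(2) 2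
      by (simp add: S_Suc qlg_step_sel)
    ultimately show ?thesis by simp
  next
    case 3
    then have "\<not> d0_legal (S m')" using qlg_op_facts(3) by blast
    then have "hd (st_in (S m2)) \<le> A2"
      using eq st_in_m2_ne m2_moves_A2(2) m2_d1_legal(1) 3
      by (auto simp: S_Suc qlg_step_sel d0_legal_iff)
    moreover have "hd (st_in (S m2)) \<noteq> A2"
      using hd_st_in[OF st_in_m2_ne] nread_m2(1) nth_eq_iff[of "nread m2" q2] pos by auto
    ultimately show ?thesis using next_smaller by simp
  qed
qed

lemma next_smaller_gives_entry_below_A1:
  assumes "hd (st_in (S m2)) < A2"
  obtains jz where "q2 < jz" "jz < q3" "p ! jz < A1"
proof -
  define jz where "jz = nread m2"
  have hd: "hd (st_in (S m2)) = p ! jz" "jz < length p"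
    using hd_st_in[OF st_in_m2_ne] jz_def by auto
  have jz: "q2 < jz" "jz < q3" using nread_m2 assms hd val jz_def by (auto simp: le_less)
  have "\<not> A1 < p ! jz"
  proof
    assume gt: "A1 < p ! jz"
    obtain \<tau>z where rz: "reads \<tau>z jz" using reads_exists hd(2) by blast
    have "m2 \<le> \<tau>z" using reads_after[OF rz] jz_def by simp
    moreover have "\<tau>z < \<tau>1" using reads_before[OF rz] readsD(1) reads_A1 jz pos
      by (simp add: reads_def)
    ultimately have "A2 \<in> set (st_d2 (S (Suc \<tau>z)))" using A2_in_d2_after_m2 by simp
    then show False
      using d1_elem_under_d2_less_A1[of "Suc \<tau>z" "p ! jz" A2] readsD(6)[OF rz] \<open>\<tau>z < \<tau>1\<close>
        assms hd gt A2_in_d2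
      by simp
  qed
  moreover have "p ! jz \<noteq> A1" using nth_eq_iff[of jz q1] hd(2) jz pos by simp
  ultimately show ?thesis using that jz by simp
qed

end

text \<open>The case in which only outputs happen between reading \<open>A\<^sub>2\<close> and moving it to \<open>D\<^sub>2\<close>.\<close>
locale occ_52314_direct = occ_52314_m2 +
  assumes direct: "st_d1 (S m2) = A2 # st_d1 (S \<tau>2)" "st_d2 (S m2) = st_d2 (S \<tau>2)"
begin

lemma \<tau>2_less_\<tau>1: "\<tau>2 < \<tau>1"
  using \<tau>2_less_m2 m2(1) by simp

lemma d_stacks_less_A2_at_\<tau>2: "e \<in> set (st_d1 (S \<tau>2)) \<or> e \<in> set (st_d2 (S \<tau>2)) \<Longrightarrow> e < A2"
  using readsD(5)[OF reads_A2] m2_d1_legal(2) direct(2) le_hd_d1[of e \<tau>2] le_hd_d2[of e \<tau>2]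
  by fastforce

lemma A1_unread_at_\<tau>2: "loc \<tau>2 A1 = 0"
  using loc_nth_eq_0_iff[of q1 \<tau>2] reads_A2 pos by (simp add: reads_def)

lemma A5_in_i_at_\<tau>2: "loc \<tau>2 A5 = 3"
proof -
  have "loc \<tau>2 A5 \<noteq> 0" using loc_nth_ne_0[of q5 \<tau>2] reads_A2 pos by (simp add: reads_def)
  moreover have "loc \<tau>2 A5 \<noteq> 4"
    using output_less_pending[of \<tau>2 A5 A1] \<tau>2_less_\<tau>1 \<tau>1_less_T mem_A A1_unread_at_\<tau>2 val
    by fastforce
  moreover have "loc \<tau>2 A5 \<noteq> 1" "loc \<tau>2 A5 \<noteq> 2"
    using d_stacks_less_A2_at_\<tau>2[of A5] loc_eq_iff(2,3)[OF mem_A(5)] val by auto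
  ultimately show ?thesis using place_le_4[of "S \<tau>2" A5] by linarith
qed

lemma last_d2_before_\<tau>2:
  obtains ms where "ms < \<tau>2" "qlg_op (S ms) = 2" "\<And>\<sigma>. ms < \<sigma> \<Longrightarrow> \<sigma> < \<tau>2 \<Longrightarrow> qlg_op (S \<sigma>) \<noteq> 2"
    "loc ms A5 \<noteq> 0"
proof -
  obtain m5 where m5: "m5 < \<tau>2" "loc m5 A5 = 2" "loc (Suc m5) A5 = Suc 2"
    using loc_passes[of 0 A5 2 \<tau>2] loc_0[OF mem_A(5)] A5_in_i_at_\<tau>2
    by (metis le0 eval_nat_numeral(3) lessI)
  then have "qlg_op (S m5) = 2" using loc_Suc_eq_SucD[of m5 A5] by simp
  then obtain ms where ms: "m5 \<le> ms" "ms < \<tau>2" "qlg_op (S ms) = 2"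
    "\<And>\<sigma>. ms < \<sigma> \<Longrightarrow> \<sigma> < \<tau>2 \<Longrightarrow> qlg_op (S \<sigma>) \<noteq> 2"
    using last_index_with[of "\<lambda>\<sigma>. qlg_op (S \<sigma>) = 2" m5 \<tau>2] m5(1) by blast
  have "loc ms A5 \<noteq> 0" using loc_mono[of m5 ms A5] ms(1) m5(2) by simp
  then show ?thesis using that ms(2-4) by blast
qed

end

locale occ_52314_ms = occ_52314_direct +
  fixes ms :: nat
  assumes ms: "ms < \<tau>2" "qlg_op (S ms) = 2" "\<And>\<sigma>. ms < \<sigma> \<Longrightarrow> \<sigma> < \<tau>2 \<Longrightarrow> qlg_op (S \<sigma>) \<noteq> 2"
    "loc ms A5 \<noteq> 0"
begin

definition jv :: nat where "jv = nread ms"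
definition y :: nat where "y = hd (st_d1 (S ms))"
abbreviation "v \<equiv> p ! jv"

lemma A2_unread_at_ms: "loc ms A2 = 0"
  using loc_mono[of ms \<tau>2 A2] ms(1) readsD(2)[OF reads_A2] by simp

lemma ms_stacks:
  "st_in (S ms) \<noteq> []" "st_d1 (S ms) \<noteq> []" "st_d2 (S ms) \<noteq> []"
  "hd (st_in (S ms)) < hd (st_d1 (S ms))" "hd (st_d1 (S ms)) < hd (st_d2 (S ms))"
proof -
  show ne: "st_in (S ms) \<noteq> []" using A2_unread_at_ms loc_eq_iff(1)[OF mem_A(2)] by auto
  have op: "\<not> d0_legal (S ms)" "\<not> d1_legal (S ms)" using qlg_op_facts(3)[OF ms(2)] by auto
  then show d1: "st_d1 (S ms) \<noteq> []" and d2: "st_d2 (S ms) \<noteq> []" using ne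
    by (auto simp: d0_legal_iff d1_legal_iff)
  have "loc ms (hd (st_in (S ms))) = 0" "loc ms (hd (st_d1 (S ms))) = 1"
    "loc ms (hd (st_d2 (S ms))) = 2"
    using loc_in_stack(1-3) ne d1 d2 by simp_all
  then have "hd (st_in (S ms)) \<noteq> hd (st_d1 (S ms))" "hd (st_d1 (S ms)) \<noteq> hd (st_d2 (S ms))" by auto
  then show "hd (st_in (S ms)) < hd (st_d1 (S ms))" "hd (st_d1 (S ms)) < hd (st_d2 (S ms))"
    using op ne d1 d2 by (auto simp: d0_legal_iff d1_legal_iff)
qed

lemma v_facts: "hd (st_in (S ms)) = v" "jv < length p" "v < y" "jv \<le> q2" "q5 < jv"
proof -
  show "hd (st_in (S ms)) = v" "jv < length p" using hd_st_in[OF ms_stacks(1)] jv_def by auto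
  then show "v < y" using ms_stacks(4) y_def by simp
  show "jv \<le> q2" "q5 < jv"
    using loc_nth_eq_0_iff[of q2 ms] loc_nth_eq_0_iff[of q5 ms] A2_unread_at_ms ms(4) pos jv_def
    by auto
qed

lemma y_mem: "y \<in> set (st_d1 (S ms))" "loc ms y = 1" "y \<in> set p"
  using hd_in_set[OF ms_stacks(2)] loc_in_stack(2) mem_state_imp_mem_p by (auto simp: y_def)

lemma y_index:
  obtains jy where "jy < length p" "y = p ! jy" "jy < jv"
proof -
  obtain jy where jy: "jy < length p" "y = p ! jy" using y_mem(3) by (metis in_set_conv_nth)
  then have "jy < jv" using loc_nth_eq_0_iff[of jy ms] y_mem(2) jv_def by simp
  then show ?thesis using that jy by blast
qed

lemma y_in_d1_after_ms: "y \<in> set (st_d1 (S (Suc ms)))"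
  using y_mem(1) ms(2) by (simp add: S_Suc qlg_step_sel)

lemma y_loc_le_2: "ms < \<sigma> \<Longrightarrow> \<sigma> \<le> \<tau>2 \<Longrightarrow> loc \<sigma> y \<le> 2"
  using loc_le_2_without_d2[of "Suc ms" \<sigma> y] ms(3) loc_in_stack(2)[OF y_in_d1_after_ms] by simp

lemma y_at_\<tau>2: "loc \<tau>2 y = 1 \<or> loc \<tau>2 y = 2" "y < A2"
proof -
  show "loc \<tau>2 y = 1 \<or> loc \<tau>2 y = 2"
    using y_loc_le_2[of \<tau>2] ms(1) loc_mono[of ms \<tau>2 y] y_mem(2) by presburger
  then show "y < A2" using d_stacks_less_A2_at_\<tau>2 loc_eq_iff(2,3)[OF y_mem(3)] by auto
qed

lemma jv_less_q2: "jv < q2"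
  using v_facts(3-4) y_at_\<tau>2(2) by (auto simp: le_less)

lemma v_below_y_until_\<tau>2: "v \<in> set (st_d1 (S \<tau>2))" "loc \<tau>2 y = 2"
proof -
  obtain \<tau>v where rv: "reads \<tau>v jv" using reads_exists v_facts(2) by blast
  have "ms \<le> \<tau>v" using reads_after[OF rv] jv_def by simp
  moreover have "\<tau>v \<noteq> ms" using ms(2) rv by (auto simp: reads_def)
  ultimately have "ms < \<tau>v" by simp
  have "\<tau>v < \<tau>2" using reads_before[OF rv] jv_less_q2 reads_A2 by (simp add: reads_def)
  have "loc \<tau>v y \<noteq> 1"
    using loc_eq_iff(2)[OF y_mem(3)] le_hd_d1[of y \<tau>v] readsD(5)[OF rv] v_facts(3) by fastforce
  then have y2: "loc \<tau>v y = 2"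
    using y_loc_le_2[of \<tau>v] \<open>ms < \<tau>v\<close> \<open>\<tau>v < \<tau>2\<close> loc_mono[of ms \<tau>v y] y_mem(2) by simp
  then show "loc \<tau>2 y = 2"
    using y_loc_le_2[of \<tau>2] ms(1) loc_mono[of \<tau>v \<tau>2 y] \<open>\<tau>v < \<tau>2\<close> by simp
  show "v \<in> set (st_d1 (S \<tau>2))"
  proof (rule d1_elem_under_d2_elem_persists)
    show "v \<in> set (st_d1 (S (Suc \<tau>v)))" using readsD(6)[OF rv] by simp
    show "y \<in> set (st_d2 (S (Suc \<tau>v)))" "y \<in> set (st_d2 (S \<tau>2))"
      using loc_const_between[of \<tau>v "Suc \<tau>v" \<tau>2 y 2] y2 \<open>loc \<tau>2 y = 2\<close> \<open>\<tau>v < \<tau>2\<close>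
        loc_eq_iff(3)[OF y_mem(3)] by auto
  qed (use \<open>\<tau>v < \<tau>2\<close> v_facts(3) in auto)
qed

lemma v_in_d1_after_m2: "v \<in> set (st_d1 (S (Suc m2)))"
  using v_below_y_until_\<tau>2(1) direct(1) m2_moves_A2(1) by (simp add: S_Suc qlg_step_sel)

lemma v_less_A1: "v < A1"
  using d1_elem_under_d2_less_A1[OF _ v_in_d1_after_m2 A2_in_d2_after_m2 _ A2_in_d2] m2(1)
    v_facts(3) y_at_\<tau>2(2) by simp

end

context occ_52314_ms
begin

lemma d2_top_above_y_at_its_read:
  assumes "reads \<tau>y jy" "y = p ! jy"
  shows "st_d2 (S \<tau>y) \<noteq> [] \<and> y < hd (st_d2 (S \<tau>y))"
proof (rule ccontr)
  assume not_above: "\<not> (st_d2 (S \<tau>y) \<noteq> [] \<and> y < hd (st_d2 (S \<tau>y)))"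
  have "jy < nread ms"
    using loc_nth_eq_0_iff[of jy ms] readsD(1)[OF assms(1)] y_mem(2) assms(2) by simp
  then have "\<tau>y < ms" using reads_before[OF assms(1)] by simp
  have "hd (st_d2 (S \<tau>y)) \<noteq> y" if "st_d2 (S \<tau>y) \<noteq> []"
    using loc_in_stack(3)[OF hd_in_set[OF that]] readsD(2)[OF assms(1)] assms(2) by auto
  then have "st_d2 (S \<tau>y) = [] \<or> hd (st_d2 (S \<tau>y)) < y" using not_above by fastforce
  then have "d1_legal (S (Suc \<tau>y))" "hd (st_d1 (S (Suc \<tau>y))) = y"
    using readsD(6,7)[OF assms(1)] assms(2) by (auto simp: d1_legal_iff)
  then have "d1_legal (S ms)"
    using legal_d1_top_stays_legal[of "Suc \<tau>y" ms y] \<open>\<tau>y < ms\<close> y_mem(2) by simp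
  then show False using qlg_op_facts(3)[OF ms(2)] by simp
qed

text \<open>The element \<open>g\<close> on top of \<open>D\<^sub>2\<close> when \<open>y\<close> is read must leave \<open>D\<^sub>2\<close> before \<open>y\<close> can enter it.\<close>
lemma d2_top_at_y_read_left_d2:
  assumes "reads \<tau>y jy" "y = p ! jy"
  shows "3 \<le> loc (Suc m2) (hd (st_d2 (S \<tau>y)))"
proof -
  define g where "g = hd (st_d2 (S \<tau>y))"
  have g: "g \<in> set (st_d2 (S \<tau>y))" "y < g"
    using d2_top_above_y_at_its_read[OF assms] hd_in_set by (auto simp: g_def)
  have "loc (Suc \<tau>y) g = 2" using readsD(7)[OF assms(1)] g(1) loc_in_stack(3) by simp
  moreover have "loc (Suc \<tau>y) y \<le> 1" "1 < loc \<tau>2 y"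
    using readsD(3)[OF assms(1)] assms(2) v_below_y_until_\<tau>2(2) by simp_all
  then obtain \<sigma> where \<sigma>: "Suc \<tau>y \<le> \<sigma>" "\<sigma> < \<tau>2" "loc \<sigma> y = 1" "loc (Suc \<sigma>) y = Suc 1"
    using loc_passes[of "Suc \<tau>y" y 1 \<tau>2] by blast
  then have "qlg_op (S \<sigma>) = 1" "hd (st_d1 (S \<sigma>)) = y"
    using loc_Suc_eq_SucD[of \<sigma> y] by (auto simp: moved_def)
  then have "st_d2 (S \<sigma>) = [] \<or> hd (st_d2 (S \<sigma>)) < y" using qlg_op_facts(2) d1_legal_iff by metis
  then have "g \<notin> set (st_d2 (S \<sigma>))" using le_hd_d2[of g \<sigma>] g(2) by auto
  then have "loc \<sigma> g \<noteq> 2"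
    using loc_eq_iff(3) mem_state_imp_mem_p[of g \<tau>y] g(1) by blast
  ultimately have "3 \<le> loc \<sigma> g" using loc_mono[of "Suc \<tau>y" \<sigma> g] \<sigma>(1) by simp
  then show ?thesis
    using loc_mono[of \<sigma> "Suc m2" g] \<sigma>(2) \<tau>2_less_m2 g_def by simp
qed

lemma d2_top_at_y_read_in_i:
  assumes "reads \<tau>y jy" "y = p ! jy"
  shows "hd (st_d2 (S \<tau>y)) \<in> set (st_i (S (Suc m2)))"
proof -
  define g where "g = hd (st_d2 (S \<tau>y))"
  have "g \<in> set (st_d2 (S \<tau>y))" "y < g"
    using d2_top_above_y_at_its_read[OF assms] hd_in_set by (auto simp: g_def)
  then have g: "g \<in> set p" "y < g" using mem_state_imp_mem_p by blast+
  have "loc (Suc m2) v = 1" using loc_in_stack(2)[OF v_in_d1_after_m2] .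
  then have "loc (Suc m2) g \<noteq> 4"
    using output_less_pending[OF _ g(1) _ _, of "Suc m2" v] m2(1) \<tau>1_less_T v_facts(2,3) g(2)
    by fastforce
  then have "loc (Suc m2) g = 3"
    using d2_top_at_y_read_left_d2[OF assms, folded g_def] place_le_4[of "S (Suc m2)" g] by linarith
  then show ?thesis using loc_eq_iff(4)[OF g(1)] g_def by simp
qed

lemma d2_top_at_y_read_above_A4:
  assumes "reads \<tau>y jy" "y = p ! jy"
  shows "A4 < hd (st_d2 (S \<tau>y))"
proof -
  define g where "g = hd (st_d2 (S \<tau>y))"
  have "g \<in> set (st_d2 (S \<tau>y))" "y < g"
    using d2_top_above_y_at_its_read[OF assms] hd_in_set by (auto simp: g_def)
  then have gp: "g \<in> set p" and "y < g" using mem_state_imp_mem_p by blast+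
  have gI: "g \<in> set (st_i (S (Suc m2)))" using d2_top_at_y_read_in_i[OF assms] g_def by simp
  have T: "Suc m2 \<le> T" using m2(1) \<tau>1_less_T by simp
  have A2: "A2 \<in> set (st_d2 (S (Suc m2)))" using A2_in_d2_after_m2[of "Suc m2"] m2(1) by simp
  have "A2 < g"
  proof (rule ccontr)
    assume "\<not> A2 < g"
    moreover have "g \<noteq> A2" using gI A2 loc_in_stack(3,4) by force
    ultimately have "deadlock g v A2 (S (Suc m2))"
      using gI A2 v_in_d1_after_m2 v_facts(3) \<open>y < g\<close> by (simp add: deadlock_def)
    then show False using no_deadlock T by blast
  qed
  have "3 \<le> loc \<tau>1 g" using loc_mono[of "Suc m2" \<tau>1 g] m2(1) gI loc_in_stack(4) by fastforce
  moreover have "loc \<tau>1 g \<noteq> 4"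
    using output_less_pending[of \<tau>1 g A1] \<tau>1_less_T gp mem_A(1) readsD(2)[OF reads_A1]
      \<open>A2 < g\<close> val(1) by fastforce
  ultimately have "loc \<tau>1 g = 3" using place_le_4[of "S \<tau>1" g] by linarith
  then have gI1: "g \<in> set (st_i (S \<tau>1))" using loc_eq_iff(4)[OF gp] by simp
  have "loc \<tau>1 A4 = 0" using loc_nth_eq_0_iff[of q4 \<tau>1] reads_A1 pos by (simp add: reads_def)
  then have "g \<noteq> A4" using \<open>loc \<tau>1 g = 3\<close> by auto
  moreover have "\<not> g < A4"
    using no_i_elem_between_A1_A4[OF gI1] \<open>A2 < g\<close> val(1) by (meson less_trans)
  ultimately show ?thesis using g_def by simp
qed

lemma entry_above_A4_before_y:
  assumes "jy < length p" "y = p ! jy"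
  obtains jg where "jg < jy" "A4 < p ! jg"
proof -
  obtain \<tau>y where ry: "reads \<tau>y jy" using reads_exists assms(1) by blast
  have g: "hd (st_d2 (S \<tau>y)) \<in> set (st_d2 (S \<tau>y))"
    using d2_top_above_y_at_its_read[OF ry assms(2)] hd_in_set by blast
  then obtain jg where jg: "jg < length p" "hd (st_d2 (S \<tau>y)) = p ! jg"
    using mem_state_imp_mem_p by (metis in_set_conv_nth)
  have "jg < jy"
    using loc_in_stack(3)[OF g] loc_nth_eq_0_iff[of jg \<tau>y] jg ry by (simp add: reads_def)
  then show ?thesis using that d2_top_at_y_read_above_A4[OF ry assms(2)] jg(2) by simp
qed

lemma direct_case_entries:
  "(\<exists>jy jv. q5 < jy \<and> jy < jv \<and> jv < q2 \<and> p ! jv < A1 \<and> p ! jv < p ! jy \<and> p ! jy < A2) \<or>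
   (\<exists>jg jy jv. jg < jy \<and> jy < q5 \<and> q5 < jv \<and> jv < q2 \<and> p ! jv < A1 \<and> p ! jv < p ! jy \<and>
      p ! jy < A2 \<and> A4 < p ! jg)"
proof -
  obtain jy where jy: "jy < length p" "y = p ! jy" "jy < jv" by (rule y_index)
  have "jy \<noteq> q5" using jy(2) y_at_\<tau>2(2) val by auto
  then consider "q5 < jy" | "jy < q5" by linarith
  then show ?thesis
  proof cases
    case 1
    then have "q5 < jy \<and> jy < jv \<and> jv < q2 \<and> v < A1 \<and> v < p ! jy \<and> p ! jy < A2"
      using jy jv_less_q2 v_less_A1 v_facts(3) y_at_\<tau>2(2) by simp
    then show ?thesis by (intro disjI1 exI)
  next
    case 2
    obtain jg where "jg < jy" "A4 < p ! jg" using entry_above_A4_before_y[OF jy(1,2)] .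
    then have "jg < jy \<and> jy < q5 \<and> q5 < jv \<and> jv < q2 \<and> v < A1 \<and> v < p ! jy \<and>
        p ! jy < A2 \<and> A4 < p ! jg"
      using 2 jy jv_less_q2 v_less_A1 v_facts(3,5) y_at_\<tau>2(2) by simp
    then show ?thesis by (intro disjI2 exI)
  qed
qed

end

lemma occurrence_52314E:
  assumes "occurrence p [5, 2, 3, 1, 4] js"
  obtains q5 q2 q3 q1 q4 where "js = [q5, q2, q3, q1, q4]"
    "q5 < q2" "q2 < q3" "q3 < q1" "q1 < q4" "q4 < length p"
    "p ! q1 < p ! q2" "p ! q2 < p ! q3" "p ! q3 < p ! q4" "p ! q4 < p ! q5"
proof -
  obtain q5 q2 q3 q1 q4 where js: "js = [q5, q2, q3, q1, q4]"
    using assms by (auto simp: occurrence_def numeral_eq_Suc length_Suc_conv)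
  have val: "\<forall>a<5. \<forall>b<5.
      p ! (js ! a) < p ! (js ! b) \<longleftrightarrow> [5, 2, 3, 1, 4 :: nat] ! a < [5, 2, 3, 1, 4] ! b"
    using assms by (simp add: occurrence_def)
  show ?thesis
  proof (rule that[OF js])
    show "p ! q1 < p ! q2" "p ! q2 < p ! q3" "p ! q3 < p ! q4" "p ! q4 < p ! q5"
      using val[rule_format, of 3 1] val[rule_format, of 1 2] val[rule_format, of 2 4]
        val[rule_format, of 4 0] by (simp_all add: js)
    show "q5 < q2" "q2 < q3" "q3 < q1" "q1 < q4" "q4 < length p"
      using assms by (auto simp: occurrence_def js)
  qed
qed

context occ_52314
begin

abbreviation extends_52314 :: bool where
  "extends_52314 \<equiv> \<exists>qU\<in>set ext_patterns. extends_to p [q5, q2, q3, q1, q4] qU"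

lemma extends_52314I:
  assumes "occurrence p q js" "map (\<lambda>u. js ! u) U = [q5, q2, q3, q1, q4]"
    "(q, U) \<in> set ext_patterns"
  shows extends_52314
  using assms unfolding extends_to_def by force

lemma extends_by_entry_below_A1:
  assumes "q2 < jz" "jz < q3" "p ! jz < A1"
  shows extends_52314
proof (rule extends_52314I)
  show "occurrence p [6, 3, 1, 4, 2, 5] [q5, q2, jz, q3, q1, q4]"
    unfolding occurrence_def using assms pos val by (simp add: All_less_Suc numeral_eq_Suc)
qed (simp_all add: ext_patterns_def)

lemma extends_by_entries_inside:
  assumes "q5 < jy" "jy < jv" "jv < q2" "p ! jv < A1" "p ! jv < p ! jy" "p ! jy < A2"
  shows extends_52314
proof (cases "p ! jy < A1")
  case True
  show ?thesis
  proof (rule extends_52314I)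
    show "occurrence p [7, 2, 1, 4, 5, 3, 6] [q5, jy, jv, q2, q3, q1, q4]"
      unfolding occurrence_def using assms True pos val by (simp add: All_less_Suc numeral_eq_Suc)
  qed (simp_all add: ext_patterns_def)
next
  case False
  then have "A1 < p ! jy" using nth_eq_iff[of jy q1] assms(1-3) pos by (auto simp: le_less)
  show ?thesis
  proof (rule extends_52314I)
    show "occurrence p [7, 3, 1, 4, 5, 2, 6] [q5, jy, jv, q2, q3, q1, q4]"
      unfolding occurrence_def using assms \<open>A1 < p ! jy\<close> pos val
      by (simp add: All_less_Suc numeral_eq_Suc)
  qed (simp_all add: ext_patterns_def)
qed

lemma extends_by_entries_around:
  assumes "jg < jy" "jy < q5" "q5 < jv" "jv < q2" "p ! jv < A1" "p ! jv < p ! jy" "p ! jy < A2"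
    "A4 < p ! jg"
  shows extends_52314
proof -
  have "p ! jy \<noteq> A1" "p ! jg \<noteq> A5" using nth_eq_iff assms(1-4) pos by auto
  then consider "p ! jy < A1" "p ! jg < A5" | "p ! jy < A1" "A5 < p ! jg"
    | "A1 < p ! jy" "p ! jg < A5" | "A1 < p ! jy" "A5 < p ! jg" by linarith
  then show ?thesis
  proof cases
    case 1
    show ?thesis
    proof (rule extends_52314I)
      show "occurrence p [7, 2, 8, 1, 4, 5, 3, 6] [jg, jy, q5, jv, q2, q3, q1, q4]"
        unfolding occurrence_def using assms 1 pos val by (simp add: All_less_Suc numeral_eq_Suc)
    qed (simp_all add: ext_patterns_def)
  next
    case 2
    show ?thesis
    proof (rule extends_52314I)
      show "occurrence p [8, 2, 7, 1, 4, 5, 3, 6] [jg, jy, q5, jv, q2, q3, q1, q4]"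
        unfolding occurrence_def using assms 2 pos val by (simp add: All_less_Suc numeral_eq_Suc)
    qed (simp_all add: ext_patterns_def)
  next
    case 3
    show ?thesis
    proof (rule extends_52314I)
      show "occurrence p [7, 3, 8, 1, 4, 5, 2, 6] [jg, jy, q5, jv, q2, q3, q1, q4]"
        unfolding occurrence_def using assms 3 pos val by (simp add: All_less_Suc numeral_eq_Suc)
    qed (simp_all add: ext_patterns_def)
  next
    case 4
    show ?thesis
    proof (rule extends_52314I)
      show "occurrence p [8, 3, 7, 1, 4, 5, 2, 6] [jg, jy, q5, jv, q2, q3, q1, q4]"
        unfolding occurrence_def using assms 4 pos val by (simp add: All_less_Suc numeral_eq_Suc)
    qed (simp_all add: ext_patterns_def)
  qed
qed

end

theorem (in qlg_sorting) occurrence_52314_extends: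
  assumes "occurrence p [5, 2, 3, 1, 4] js"
  shows "\<exists>qU\<in>set ext_patterns. extends_to p js qU"
proof -
  obtain q5 q2 q3 q1 q4 where js: "js = [q5, q2, q3, q1, q4]"
    and pos: "q5 < q2" "q2 < q3" "q3 < q1" "q1 < q4" "q4 < length p"
    and val: "p ! q1 < p ! q2" "p ! q2 < p ! q3" "p ! q3 < p ! q4" "p ! q4 < p ! q5"
    using occurrence_52314E[OF assms] by blast
  obtain \<tau>1 where "reads \<tau>1 q1" using reads_exists pos by (meson less_trans)
  then interpret occ_52314 p q5 q2 q3 q1 q4 \<tau>1
    using pos val by unfold_locales
  obtain \<tau>2 m2 where "reads \<tau>2 q2" "m2 < \<tau>1" "loc m2 A2 = 1" "loc (Suc m2) A2 = 2"
    by (rule A2_moves_to_d2)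
  then interpret occ_52314_m2 p q5 q2 q3 q1 q4 \<tau>1 \<tau>2 m2
    by unfold_locales
  have extends_52314
  proof (cases rule: A2_move_cases)
    case next_smaller
    then show ?thesis using next_smaller_gives_entry_below_A1 extends_by_entry_below_A1 by metis
  next
    case direct
    then interpret occ_52314_direct p q5 q2 q3 q1 q4 \<tau>1 \<tau>2 m2
      by unfold_locales
    obtain ms where "ms < \<tau>2" "qlg_op (S ms) = 2" "\<And>\<sigma>. ms < \<sigma> \<Longrightarrow> \<sigma> < \<tau>2 \<Longrightarrow> qlg_op (S \<sigma>) \<noteq> 2"
      "loc ms A5 \<noteq> 0" using last_d2_before_\<tau>2 by blast
    then interpret occ_52314_ms p q5 q2 q3 q1 q4 \<tau>1 \<tau>2 m2 ms
      by unfold_locales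
    show ?thesis
      using direct_case_entries extends_by_entries_inside extends_by_entries_around by blast
  qed
  then show ?thesis using js by simp
qed

theorem mainTheorem13:
  fixes p :: "nat list"
  assumes "qlg2_sortable p"
  shows "\<not> contains p [3,2,1,4]
    \<and> (\<forall>is. occurrence p [5,2,3,1,4] is \<longrightarrow> (\<exists>qU\<in>set ext_patterns. extends_to p is qU))"
proof -
  interpret qlg_sorting p using assms by unfold_locales
  show ?thesis using avoids_3214 occurrence_52314_extends by blast
qed

end
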